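(* Let $p,q\in\mathbb N$ with $\gcd(p,q)=1$ and suppose $\alpha=\sqrt{p/q}$ is irrational. (1) If the equation $x^2-pqy^2=-1$ has no integer solution, then for $A\in GL(2,\mathbb Z)$, $\pi(A)$ restricts to an isometric automorphism of $\mathcal A_\alpha$ if and only if $A=\begin{bmatrix} x_1&qy_1\\ py_1&x_1\end{bmatrix}^n$ for some $n\in\mathbb Z$, where $(x_1,y_1)$ is the fundamental solution of $x^2-pqy^2=1$. (2) If $x^2-pqy^2=-1$ has an integer solution, then for $A\in GL(2,\mathbb Z)$, $\pi(A)$ restricts to an isometric automorphism of $\mathcal A_\alpha$ if and only if $A=\begin{bmatrix} x_1'&qy_1'\\ py_1'&x_1'\end{bmatrix}^n$ for some $n\in\mathbb Z$, where $(x_1',y_1')$ is the fundamental solution of $x^2-pqy^2=-1$.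
   Context: For a positive irrational $\alpha$, $\mathcal A_\alpha=\{f\in C(\mathbb T^2): \hat f(m,n)=0 \text{ whenever } m+\alpha n<0\}$ ($\mathbb T$ the unit circle, $\hat f$ the Fourier transform on $\mathbb Z^2$), a uniform algebra with the sup norm. For $A=\begin{bmatrix} a&b\\ c&d\end{bmatrix}\in GL(2,\mathbb Z)$, $\pi(A)(f)=f\circ\varphi$ with $\varphi(z,w)=(z^aw^b,z^cw^d)$. For a positive nonsquare integer $N$ and $e\in\{1,-1\}$, the fundamental solution of $x^2-Ny^2=e$ (when a solution exists) is the solution $(x_1,y_1)$ in positive integers with $x_1$ smallest. *)

theory Defs
  imports "HOL-Analysis.Analysis"
begin

definition torus :: "(complex \<times> complex) set" where
  "torus = {(z, w). cmod z = 1 \<and> cmod w = 1}"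

definition fourier_coeff :: "(complex \<times> complex \<Rightarrow> complex) \<Rightarrow> int \<Rightarrow> int \<Rightarrow> complex" where
  "fourier_coeff f m n =
     integral (cbox (0::real, 0::real) (2 * pi, 2 * pi))
       (\<lambda>x. f (cis (fst x), cis (snd x)) * cis (- (of_int m * fst x + of_int n * snd x)))
     / complex_of_real (4 * pi\<^sup>2)"

definition A_alpha :: "real \<Rightarrow> (complex \<times> complex \<Rightarrow> complex) set" where
  "A_alpha \<alpha> = {f. continuous_on torus f \<and>
      (\<forall>m n. real_of_int m + \<alpha> * real_of_int n < 0 \<longrightarrow> fourier_coeff f m n = 0)}"

definition sup_norm :: "(complex \<times> complex \<Rightarrow> complex) \<Rightarrow> real" where
  "sup_norm f = (SUP x\<in>torus. cmod (f x))"

text \<open>A matrix [[a,b],[c,d]] is represented as the quadruple (a,b,c,d).\<close>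
type_synonym mat2 = "int \<times> int \<times> int \<times> int"

fun mat2_mult :: "mat2 \<Rightarrow> mat2 \<Rightarrow> mat2" where
  "mat2_mult (a, b, c, d) (a', b', c', d') =
     (a * a' + b * c', a * b' + b * d', c * a' + d * c', c * b' + d * d')"

definition mat2_one :: mat2 where "mat2_one = (1, 0, 0, 1)"

fun mat2_det :: "mat2 \<Rightarrow> int" where
  "mat2_det (a, b, c, d) = a * d - b * c"

definition GL2Z :: "mat2 set" where
  "GL2Z = {M. mat2_det M = 1 \<or> mat2_det M = -1}"

text \<open>Inverse of a matrix with determinant +-1 (then 1/det = det).\<close>
fun mat2_inv :: "mat2 \<Rightarrow> mat2" where
  "mat2_inv (a, b, c, d) = (let e = a * d - b * c in (e * d, - e * b, - e * c, e * a))"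

fun mat2_pow :: "mat2 \<Rightarrow> nat \<Rightarrow> mat2" where
  "mat2_pow M 0 = mat2_one"
| "mat2_pow M (Suc k) = mat2_mult M (mat2_pow M k)"

definition mat2_zpow :: "mat2 \<Rightarrow> int \<Rightarrow> mat2" where
  "mat2_zpow M n = (if 0 \<le> n then mat2_pow M (nat n) else mat2_pow (mat2_inv M) (nat (- n)))"

fun phi :: "mat2 \<Rightarrow> complex \<times> complex \<Rightarrow> complex \<times> complex" where
  "phi (a, b, c, d) (z, w) = (z powi a * w powi b, z powi c * w powi d)"

definition piA :: "mat2 \<Rightarrow> (complex \<times> complex \<Rightarrow> complex) \<Rightarrow> (complex \<times> complex \<Rightarrow> complex)" where
  "piA M f = f \<circ> phi M"

text \<open>pi(A) restricts to an isometric automorphism of A_alpha: it maps A_alpha into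
  A_alpha, preserves the sup norm, and is bijective on A_alpha (functions being
  identified when they agree on the torus).\<close>
definition isometric_aut :: "real \<Rightarrow> mat2 \<Rightarrow> bool" where
  "isometric_aut \<alpha> M \<longleftrightarrow>
     (\<forall>f\<in>A_alpha \<alpha>. piA M f \<in> A_alpha \<alpha>) \<and>
     (\<forall>f\<in>A_alpha \<alpha>. sup_norm (piA M f) = sup_norm f) \<and>
     (\<forall>f\<in>A_alpha \<alpha>. \<forall>g\<in>A_alpha \<alpha>.
        (\<forall>x\<in>torus. piA M f x = piA M g x) \<longrightarrow> (\<forall>x\<in>torus. f x = g x)) \<and>
     (\<forall>g\<in>A_alpha \<alpha>. \<exists>f\<in>A_alpha \<alpha>. \<forall>x\<in>torus. piA M f x = g x)"

definition is_fundamental_solution :: "int \<Rightarrow> int \<Rightarrow> int \<Rightarrow> int \<Rightarrow> bool" where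
  "is_fundamental_solution N e x1 y1 \<longleftrightarrow>
     x1 > 0 \<and> y1 > 0 \<and> x1\<^sup>2 - N * y1\<^sup>2 = e \<and>
     (\<forall>x y. x > 0 \<and> y > 0 \<and> x\<^sup>2 - N * y\<^sup>2 = e \<longrightarrow> x1 \<le> x)"

end

theory Submission
  imports Defs
begin

text \<open>Substituting \<open>(s, t) \<mapsto> A (s, t)\<close> in the Fourier integral (a unimodular change of
  variables, which Euclid's algorithm reduces to swaps and shears) shows that \<open>\<pi>(A)\<close> carries the
  Fourier coefficient of \<open>f\<close> at \<open>(j, k)\<close> to the frequency \<open>A\<^sup>T (j, k)\<close>. Hence \<open>\<pi>(A)\<close> preserves
  \<open>A_alpha \<alpha>\<close> iff \<open>A\<^sup>T\<close> preserves the half-plane \<open>m + \<alpha> n \<ge> 0\<close>; testing this on monomials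
  and using the density of \<open>\<int> + \<alpha> \<int>\<close> for irrational \<open>\<alpha>\<close>, this means that \<open>(1, \<alpha>)\<close> is an
  eigenvector of \<open>A\<close> with positive eigenvalue, and then \<open>\<pi>(A)\<close> is automatically an isometric
  automorphism. For \<open>\<alpha> = sqrt (p / q)\<close> with \<open>p, q\<close> coprime these are exactly the matrices
  \<open>[[x, q y], [p y, x]]\<close> with \<open>x + y sqrt (p q)\<close> a positive unit of \<open>\<int>[sqrt (p q)]\<close>; this
  correspondence is multiplicative, and the positive units are the powers of the smallest unit
  exceeding \<open>1\<close>, which is the fundamental solution of norm \<open>-1\<close> if there is one and of
  norm \<open>1\<close> otherwise.\<close>

section \<open>Unimodular substitutions in integrals over the torus\<close>

lemma periodic_int_multiple:
  fixes h :: "real \<Rightarrow> 'a"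
  assumes per: "\<And>x. h (x + T) = h x"
  shows "h (x + of_int k * T) = h x"
proof -
  have nat_case: "h (x + real n * T) = h x" for x n
  proof (induction n arbitrary: x)
    case (Suc n)
    have "x + real (Suc n) * T = (x + real n * T) + T" by (simp add: algebra_simps)
    then show ?case using Suc per by metis
  qed simp
  show ?thesis
  proof (cases "k \<ge> 0")
    case True
    then show ?thesis using nat_case[of x "nat k"] by simp
  next
    case False
    have "h x = h ((x + of_int k * T) + real (nat (- k)) * T)"
      using False by (simp add: algebra_simps)
    then show ?thesis using nat_case by metis
  qed
qed

lemma integral_periodic_shift:
  fixes h :: "real \<Rightarrow> complex"
  assumes per: "\<And>x. h (x + 2*pi) = h x" and cont: "continuous_on UNIV h"
  shows "integral {b..b + 2*pi} h = integral {0..2*pi} h"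
proof -
  have int: "h integrable_on {u..v}" for u v
    using cont continuous_on_subset integrable_continuous_interval by blast
  have reduced: "integral {c..c + 2*pi} h = integral {0..2*pi} h" if c: "0 \<le> c" "c \<le> 2*pi" for c
  proof -
    have "integral {c..c + 2*pi} h = integral {c..2*pi} h + integral {2*pi..c + 2*pi} h"
      using Henstock_Kurzweil_Integration.integral_combine[where a=c and c="2*pi" and b="c + 2*pi" and f=h] c int by simp
    also have "integral {2*pi..c + 2*pi} h = integral {0..c} h"
      using integral_shift_real_ivl[where f=h and c="2*pi" and a="2*pi" and b="c + 2*pi"] per by simp
    also have "integral {c..2*pi} h + integral {0..c} h = integral {0..2*pi} h"
      using Henstock_Kurzweil_Integration.integral_combine[where a=0 and c=c and b="2*pi" and f=h] c int by (simp add: add.commute)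
    finally show ?thesis .
  qed
  define k where "k = \<lfloor>b / (2*pi)\<rfloor>"
  define c where "c = b - of_int k * (2*pi)"
  have "of_int k \<le> b / (2*pi)" "b / (2*pi) < of_int k + 1"
    unfolding k_def by linarith+
  then have c_bounds: "0 \<le> c" "c \<le> 2*pi"
    unfolding c_def by (auto simp: field_simps)
  have "integral {b..b + 2*pi} h = integral {c..c + 2*pi} (\<lambda>x. h (x + of_int k * (2*pi)))"
    using integral_shift_real_ivl[where f=h and c="of_int k * (2*pi)" and a=b and b="b + 2*pi"]
    unfolding c_def by (simp add: algebra_simps)
  also have "\<dots> = integral {c..c + 2*pi} h"
    using periodic_int_multiple[of h, OF per] by simp
  finally show ?thesis using reduced[OF c_bounds] by simp
qed

lemma integral_periodic_affine:
  fixes h :: "real \<Rightarrow> complex"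
  assumes per: "\<And>x. h (x + 2*pi) = h x" and cont: "continuous_on UNIV h"
    and sign: "\<bar>e\<bar> = 1"
  shows "integral {0..2*pi} (\<lambda>s. h (e * s + b)) = integral {0..2*pi} h"
proof (cases "e = 1")
  case True
  then show ?thesis
    using integral_shift_real_ivl[where f=h and c=b and a=b and b="b + 2*pi"] integral_periodic_shift[OF per cont, of b]
    by (simp add: add.commute)
next
  case False
  then have "e = -1" using sign by linarith
  have "integral {0..2*pi} (\<lambda>s. h (- s + b)) = integral {-2*pi..0} (\<lambda>s. h (s + b))"
    using Henstock_Kurzweil_Integration.integral_reflect_real[where a="-(2*pi)" and b=0 and f="\<lambda>s. h (s + b)"] by simp
  also have "\<dots> = integral {b - 2*pi..b} h"
    using integral_shift_real_ivl[where f=h and c=b and a="b - 2*pi" and b=b] by simp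
  also have "\<dots> = integral {0..2*pi} h"
    using integral_periodic_shift[OF per cont, of "b - 2*pi"] by simp
  finally show ?thesis using \<open>e = -1\<close> by simp
qed

definition cont_doubly_periodic :: "(real \<times> real \<Rightarrow> complex) \<Rightarrow> bool" where
  "cont_doubly_periodic G \<longleftrightarrow> continuous_on UNIV G \<and>
     (\<forall>u v. G (u + 2*pi, v) = G (u, v) \<and> G (u, v + 2*pi) = G (u, v))"

fun lin_map :: "mat2 \<Rightarrow> real \<times> real \<Rightarrow> real \<times> real" where
  "lin_map (a, b, c, d) (s, t) = (of_int a * s + of_int b * t, of_int c * s + of_int d * t)"

definition square_integral :: "(real \<times> real \<Rightarrow> complex) \<Rightarrow> complex" where
  "square_integral G = integral (cbox (0, 0) (2*pi, 2*pi)) G"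

definition preserves_square_integral :: "mat2 \<Rightarrow> bool" where
  "preserves_square_integral M \<longleftrightarrow>
     (\<forall>G. cont_doubly_periodic G \<longrightarrow> square_integral (G \<circ> lin_map M) = square_integral G)"

lemma cont_doubly_periodic_continuous_on:
  "cont_doubly_periodic G \<Longrightarrow> continuous_on S G"
  unfolding cont_doubly_periodic_def using continuous_on_subset by blast

lemma cont_doubly_periodic_int_shift:
  assumes "cont_doubly_periodic G"
  shows "G (u + of_int i * (2*pi), v + of_int j * (2*pi)) = G (u, v)"
  using periodic_int_multiple[of "\<lambda>x. G (x, _)"] periodic_int_multiple[of "\<lambda>y. G (u, y)"] assms
  unfolding cont_doubly_periodic_def by metis

lemma continuous_lin_map: "continuous_on S (lin_map M)"
proof -
  obtain a b c d where M: "M = (a, b, c, d)" by (cases M) auto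
  have "lin_map M = (\<lambda>x. (of_int a * fst x + of_int b * snd x, of_int c * fst x + of_int d * snd x))"
    unfolding M by (auto simp: fun_eq_iff)
  then show ?thesis by (simp only:) (intro continuous_intros)
qed

lemma cont_doubly_periodic_compose_lin_map:
  assumes G: "cont_doubly_periodic G"
  shows "cont_doubly_periodic (G \<circ> lin_map M)"
proof -
  obtain a b c d where M: "M = (a, b, c, d)" by (cases M) auto
  have "continuous_on UNIV (G \<circ> lin_map M)"
    using G continuous_lin_map continuous_on_compose cont_doubly_periodic_continuous_on by blast
  moreover have "G (lin_map M (u + 2*pi, v)) = G (lin_map M (u, v))"
      and "G (lin_map M (u, v + 2*pi)) = G (lin_map M (u, v))" for u v
    using cont_doubly_periodic_int_shift[OF G, of "of_int a * u + of_int b * v" a "of_int c * u + of_int d * v" c]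
      cont_doubly_periodic_int_shift[OF G, of "of_int a * u + of_int b * v" b "of_int c * u + of_int d * v" d]
    unfolding M by (simp_all add: algebra_simps)
  ultimately show ?thesis unfolding cont_doubly_periodic_def by simp
qed

lemma lin_map_mult: "lin_map (mat2_mult A B) x = lin_map A (lin_map B x)"
  by (cases A; cases B; cases x) (simp add: algebra_simps)

lemma preserves_square_integral_mult:
  assumes "preserves_square_integral A" "preserves_square_integral B"
  shows "preserves_square_integral (mat2_mult A B)"
  unfolding preserves_square_integral_def
proof (intro allI impI)
  fix G assume G: "cont_doubly_periodic G"
  have "G \<circ> lin_map (mat2_mult A B) = (G \<circ> lin_map A) \<circ> lin_map B"
    by (auto simp: lin_map_mult)
  then show "square_integral (G \<circ> lin_map (mat2_mult A B)) = square_integral G"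
    using assms cont_doubly_periodic_compose_lin_map[OF G] G
    unfolding preserves_square_integral_def by simp
qed

lemma preserves_square_integral_swap: "preserves_square_integral (0, 1, 1, 0)"
  unfolding preserves_square_integral_def
proof (intro allI impI)
  fix G assume G: "cont_doubly_periodic G"
  have "continuous_on (cbox (0, 0) (2*pi, 2*pi)) (\<lambda>(x, y). G (x, y))"
    using cont_doubly_periodic_continuous_on[OF G] by simp
  moreover have "G \<circ> lin_map (0, 1, 1, 0) = (\<lambda>(x, y). G (y, x))"
    by (auto simp: fun_eq_iff)
  ultimately show "square_integral (G \<circ> lin_map (0, 1, 1, 0)) = square_integral G"
    using integral_swap_2dim[where f="\<lambda>x y. G (x, y)"] unfolding square_integral_def by simp
qed

lemma preserves_square_integral_lower_triangular:
  assumes a: "\<bar>a\<bar> = 1" and d: "\<bar>d\<bar> = 1"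
  shows "preserves_square_integral (a, 0, c, d)"
  unfolding preserves_square_integral_def
proof (intro allI impI)
  fix G assume G: "cont_doubly_periodic G"
  have slice_cont: "continuous_on UNIV (\<lambda>t. G (u, t))" for u
    using continuous_on_compose[of UNIV "\<lambda>t. (u, t)" G] cont_doubly_periodic_continuous_on[OF G]
    by (simp add: o_def continuous_on_Pair)
  define \<psi> where "\<psi> u = integral {0..2*pi} (\<lambda>t. G (u, t))" for u
  have \<psi>_cont: "continuous_on UNIV \<psi>"
    using integral_continuous_on_param[where U=UNIV and a=0 and b="2*pi" and f="\<lambda>x t. G (x, t)"]
      cont_doubly_periodic_continuous_on[OF G] unfolding \<psi>_def by simp
  have \<psi>_periodic: "\<psi> (x + 2*pi) = \<psi> x" for x
    using G unfolding \<psi>_def cont_doubly_periodic_def by simp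
  have inner: "integral {0..2*pi} (\<lambda>t. G (of_int a * s, of_int c * s + of_int d * t)) = \<psi> (of_int a * s)" for s
  proof -
    have "integral {0..2*pi} (\<lambda>t. G (of_int a * s, of_int d * t + of_int c * s)) = \<psi> (of_int a * s)"
      unfolding \<psi>_def using G d
      by (intro integral_periodic_affine) (auto simp: cont_doubly_periodic_def intro: slice_cont)
    then show ?thesis by (simp add: add.commute)
  qed
  have "square_integral (G \<circ> lin_map (a, 0, c, d))
      = integral {0..2*pi} (\<lambda>s. integral {0..2*pi} (\<lambda>t. G (of_int a * s, of_int c * s + of_int d * t)))"
    unfolding square_integral_def
      integral_prod_continuous[OF cont_doubly_periodic_continuous_on[OF cont_doubly_periodic_compose_lin_map[OF G]]]
    by simp
  also have "\<dots> = integral {0..2*pi} (\<lambda>s. \<psi> (of_int a * s + 0))"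
    using inner by simp
  also have "\<dots> = integral {0..2*pi} \<psi>"
    using integral_periodic_affine[OF \<psi>_periodic \<psi>_cont, of "of_int a" 0] a by simp
  also have "\<dots> = square_integral G"
    unfolding square_integral_def integral_prod_continuous[OF cont_doubly_periodic_continuous_on[OF G]] \<psi>_def
    by simp
  finally show "square_integral (G \<circ> lin_map (a, 0, c, d)) = square_integral G" .
qed

text \<open>Euclid's algorithm on the first row factors every unimodular matrix into swaps and
  lower triangular matrices.\<close>
lemma preserves_square_integral_unimodular:
  "\<bar>a * d - b * c\<bar> = 1 \<Longrightarrow> preserves_square_integral (a, b, c, d)"
proof (induction "nat \<bar>b\<bar>" arbitrary: a b c d rule: less_induct)
  case less
  show ?case
  proof (cases "b = 0")
    case True
    then have "\<bar>a\<bar> = 1" "\<bar>d\<bar> = 1"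
      using less.prems by (auto simp: abs_mult zmult_eq_1_iff)
    then show ?thesis using True preserves_square_integral_lower_triangular by blast
  next
    case False
    define k where "k = - (a div b)"
    have "a + b * k = a mod b"
      unfolding k_def using div_mult_mod_eq[of a b] by (simp add: algebra_simps)
    then have "nat \<bar>a + b * k\<bar> < nat \<bar>b\<bar>"
      using False abs_mod_less by simp
    moreover have "\<bar>b * (c + d * k) - (a + b * k) * d\<bar> = 1"
      using less.prems by (simp add: algebra_simps abs_minus_commute)
    ultimately have reduced: "preserves_square_integral (b, a + b * k, d, c + d * k)"
      using less.hyps by blast
    have "(a, b, c, d) = mat2_mult (mat2_mult (b, a + b * k, d, c + d * k) (0, 1, 1, 0)) (1, 0, -k, 1)"
      by (simp add: algebra_simps)
    then show ?thesis
      using reduced by (auto intro!: preserves_square_integral_mult preserves_square_integral_swap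
          preserves_square_integral_lower_triangular simp del: mat2_mult.simps)
  qed
qed

lemma GL2Z_iff: "(a, b, c, d) \<in> GL2Z \<longleftrightarrow> \<bar>a * d - b * c\<bar> = 1"
  unfolding GL2Z_def by auto

section \<open>Composition operators and Fourier coefficients\<close>

lemma cis_in_torus: "(cis s, cis t) \<in> torus"
  unfolding torus_def by simp

lemma torus_nonzero: "(z, w) \<in> torus \<Longrightarrow> z \<noteq> 0 \<and> w \<noteq> 0"
  unfolding torus_def by auto

lemma phi_cis:
  "phi (a, b, c, d) (cis s, cis t) = (cis (of_int a * s + of_int b * t), cis (of_int c * s + of_int d * t))"
  by (simp add: cis_power_int cis_mult)

lemma cis_add_int_multiple: "cis (x + of_int k * (2*pi)) = cis x"
  using periodic_int_multiple[of cis "2*pi"] by (simp add: cis_mult[symmetric])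

definition fourier_integrand :: "(complex \<times> complex \<Rightarrow> complex) \<Rightarrow> int \<Rightarrow> int \<Rightarrow> real \<times> real \<Rightarrow> complex" where
  "fourier_integrand f m n x = f (cis (fst x), cis (snd x)) * cis (- (of_int m * fst x + of_int n * snd x))"

lemma fourier_coeff_eq_square_integral:
  "fourier_coeff f m n = square_integral (fourier_integrand f m n) / complex_of_real (4 * pi\<^sup>2)"
  unfolding fourier_coeff_def square_integral_def fourier_integrand_def by simp

lemma cont_doubly_periodic_fourier_integrand:
  assumes "continuous_on torus f"
  shows "cont_doubly_periodic (fourier_integrand f m n)"
proof -
  have "continuous_on UNIV (\<lambda>x::real \<times> real. (cis (fst x), cis (snd x)))"
    unfolding cis_conv_exp by (intro continuous_intros)
  moreover have "range (\<lambda>x::real \<times> real. (cis (fst x), cis (snd x))) \<subseteq> torus"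
    using cis_in_torus by auto
  ultimately have "continuous_on UNIV (\<lambda>x::real \<times> real. f (cis (fst x), cis (snd x)))"
    using continuous_on_compose continuous_on_subset[OF assms] unfolding o_def by blast
  moreover have "continuous_on UNIV (\<lambda>x::real \<times> real. cis (- (of_int m * fst x + of_int n * snd x)))"
    unfolding cis_conv_exp by (intro continuous_intros)
  ultimately have cont: "continuous_on UNIV (fourier_integrand f m n)"
    unfolding fourier_integrand_def[abs_def] by (rule continuous_on_mult)
  have shift: "fourier_integrand f m n (u + of_int i * (2*pi), v + of_int j * (2*pi)) = fourier_integrand f m n (u, v)"
    for u v i j
  proof -
    have "- (of_int m * (u + of_int i * (2*pi)) + of_int n * (v + of_int j * (2*pi)))
        = - (of_int m * u + of_int n * v) + of_int (- (m * i + n * j)) * (2*pi)"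
      by (simp add: algebra_simps)
    then show ?thesis
      unfolding fourier_integrand_def fst_conv snd_conv by (simp only: cis_add_int_multiple)
  qed
  show ?thesis
    using cont shift[of _ 1 _ 0] shift[of _ 0 _ 1] unfolding cont_doubly_periodic_def by simp
qed

lemma fourier_coeff_piA:
  assumes M: "(a, b, c, d) \<in> GL2Z" and f: "continuous_on torus f"
  shows "fourier_coeff (piA (a, b, c, d) f) (a * j + c * k) (b * j + d * k) = fourier_coeff f j k"
proof -
  have "fourier_integrand (piA (a, b, c, d) f) (a * j + c * k) (b * j + d * k)
      = fourier_integrand f j k \<circ> lin_map (a, b, c, d)"
    by (auto simp: fun_eq_iff fourier_integrand_def piA_def phi_cis algebra_simps simp del: phi.simps)
  then show ?thesis
    using preserves_square_integral_unimodular M cont_doubly_periodic_fourier_integrand[OF f]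
    unfolding fourier_coeff_eq_square_integral preserves_square_integral_def GL2Z_iff by simp
qed

definition torus_monomial :: "int \<Rightarrow> int \<Rightarrow> complex \<times> complex \<Rightarrow> complex" where
  "torus_monomial j k x = fst x powi j * snd x powi k"

lemma integral_cis_int_multiple:
  "integral {0..2*pi} (\<lambda>s. cis (of_int r * s)) = (if r = 0 then complex_of_real (2*pi) else 0)"
proof (cases "r = 0")
  case True
  then show ?thesis by (simp add: scaleR_conv_of_real)
next
  case False
  then have nz: "\<i> * of_int r \<noteq> (0::complex)" by simp
  have "(\<lambda>s. cis (of_int r * s)) = (\<lambda>t. exp ((\<i> * of_int r) * complex_of_real t))"
    by (auto simp: cis_conv_exp fun_eq_iff algebra_simps)
  then have "integral {0..2*pi} (\<lambda>s. cis (of_int r * s))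
      = (exp ((\<i> * of_int r) * of_real (2*pi)) - 1) / (\<i> * of_int r)"
    using integral_exp[OF _ nz, of "2*pi"] by simp
  also have "exp ((\<i> * of_int r) * of_real (2*pi)) = 1"
    using cis_multiple_2pi[of "of_int r"] by (simp add: cis_conv_exp algebra_simps)
  finally show ?thesis using False by simp
qed

lemma continuous_on_torus_monomial: "continuous_on torus (torus_monomial j k)"
  unfolding torus_monomial_def[abs_def] by (intro continuous_intros) (auto dest: torus_nonzero)

lemma fourier_coeff_torus_monomial: "fourier_coeff (torus_monomial j k) m n = (if m = j \<and> n = k then 1 else 0)"
proof -
  have "fourier_integrand (torus_monomial j k) m n (s, t) = cis (of_int (j - m) * s) * cis (of_int (k - n) * t)" for s t
    unfolding fourier_integrand_def torus_monomial_def by (simp add: cis_power_int cis_mult algebra_simps)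
  then have "square_integral (fourier_integrand (torus_monomial j k) m n)
      = integral {0..2*pi} (\<lambda>s. cis (of_int (j - m) * s)) * integral {0..2*pi} (\<lambda>t. cis (of_int (k - n) * t))"
    unfolding square_integral_def
      integral_prod_continuous[OF cont_doubly_periodic_continuous_on[OF cont_doubly_periodic_fourier_integrand[OF continuous_on_torus_monomial]]]
    by simp
  then show ?thesis
    unfolding fourier_coeff_eq_square_integral integral_cis_int_multiple by (auto simp: power2_eq_square)
qed

lemma torus_monomial_in_A_alpha: "of_int j + \<alpha> * of_int k \<ge> 0 \<Longrightarrow> torus_monomial j k \<in> A_alpha \<alpha>"
  unfolding A_alpha_def using continuous_on_torus_monomial by (auto simp: fourier_coeff_torus_monomial)

lemma phi_in_torus: "x \<in> torus \<Longrightarrow> phi M x \<in> torus"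
  by (cases M; cases x) (auto simp: torus_def norm_mult norm_power_int)

lemma phi_mult: "x \<in> torus \<Longrightarrow> phi A (phi B x) = phi (mat2_mult A B) x"
  by (cases A; cases B; cases x)
    (auto dest!: torus_nonzero simp: power_int_mult_distrib power_int_mult[symmetric] power_int_add mult_ac)

lemma phi_one: "phi mat2_one x = x"
  by (cases x) (simp add: mat2_one_def)

lemma GL2Z_det_square: "M \<in> GL2Z \<Longrightarrow> mat2_det M * mat2_det M = 1"
  unfolding GL2Z_def by auto

lemma mat2_mult_inv: "M \<in> GL2Z \<Longrightarrow> mat2_mult M (mat2_inv M) = mat2_one"
proof -
  assume M: "M \<in> GL2Z"
  have "mat2_mult M (mat2_inv M) = (mat2_det M * mat2_det M, 0, 0, mat2_det M * mat2_det M)"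
    by (cases M) (simp add: Let_def algebra_simps)
  then show ?thesis using GL2Z_det_square[OF M] by (simp add: mat2_one_def)
qed

lemma mat2_inv_mult: "M \<in> GL2Z \<Longrightarrow> mat2_mult (mat2_inv M) M = mat2_one"
proof -
  assume M: "M \<in> GL2Z"
  have "mat2_mult (mat2_inv M) M = (mat2_det M * mat2_det M, 0, 0, mat2_det M * mat2_det M)"
    by (cases M) (simp add: Let_def algebra_simps)
  then show ?thesis using GL2Z_det_square[OF M] by (simp add: mat2_one_def)
qed

lemma mat2_inv_in_GL2Z: "M \<in> GL2Z \<Longrightarrow> mat2_inv M \<in> GL2Z"
proof -
  assume M: "M \<in> GL2Z"
  have "mat2_det (mat2_inv M) = mat2_det M * mat2_det M * mat2_det M"
    by (cases M) (simp add: Let_def algebra_simps)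
  then show ?thesis using M GL2Z_det_square[OF M] unfolding GL2Z_def by auto
qed

lemma phi_inv_right: "M \<in> GL2Z \<Longrightarrow> x \<in> torus \<Longrightarrow> phi M (phi (mat2_inv M) x) = x"
  by (simp add: phi_mult mat2_mult_inv phi_one)

lemma phi_inv_left: "M \<in> GL2Z \<Longrightarrow> x \<in> torus \<Longrightarrow> phi (mat2_inv M) (phi M x) = x"
  by (simp add: phi_mult mat2_inv_mult phi_one)

lemma phi_image_torus: "M \<in> GL2Z \<Longrightarrow> phi M ` torus = torus"
  by (metis image_subsetI phi_in_torus phi_inv_right image_eqI subsetI subset_antisym)

lemma continuous_on_piA: "continuous_on torus f \<Longrightarrow> continuous_on torus (piA M f)"
proof -
  assume f: "continuous_on torus f"
  obtain a b c d where M: "M = (a, b, c, d)" by (cases M) auto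
  have "phi M = (\<lambda>x. (fst x powi a * snd x powi b, fst x powi c * snd x powi d))"
    unfolding M by (auto simp: fun_eq_iff)
  then have "continuous_on torus (phi M)"
    by (simp, intro continuous_intros) (auto dest: torus_nonzero)
  then show ?thesis
    unfolding piA_def using f phi_in_torus continuous_on_compose continuous_on_subset
    by (metis image_subsetI)
qed

section \<open>Isometric automorphisms of \<open>A_alpha\<close>\<close>

definition positive_eigenvector :: "real \<Rightarrow> mat2 \<Rightarrow> bool" where
  "positive_eigenvector \<alpha> M \<longleftrightarrow> (\<exists>\<kappa>>0. lin_map M (1, \<alpha>) = \<kappa> *\<^sub>R (1, \<alpha>))"

lemma positive_eigenvector_iff:
  "positive_eigenvector \<alpha> (a, b, c, d) \<longleftrightarrow>
     of_int a + \<alpha> * of_int b > 0 \<and> of_int c + \<alpha> * of_int d = \<alpha> * (of_int a + \<alpha> * of_int b)"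
  by (auto simp: positive_eigenvector_def algebra_simps)

lemma lin_map_one: "lin_map mat2_one x = x"
  by (cases x) (simp add: mat2_one_def)

lemma lin_map_scaleR: "lin_map M (r *\<^sub>R x) = r *\<^sub>R lin_map M x"
  by (cases M; cases x) (simp add: algebra_simps)

lemma positive_eigenvector_inv:
  assumes M: "M \<in> GL2Z" and eig: "positive_eigenvector \<alpha> M"
  shows "positive_eigenvector \<alpha> (mat2_inv M)"
proof -
  obtain \<kappa> where \<kappa>: "\<kappa> > 0" "lin_map M (1, \<alpha>) = \<kappa> *\<^sub>R (1, \<alpha>)"
    using eig unfolding positive_eigenvector_def by blast
  have "(1, \<alpha>) = lin_map (mat2_inv M) (lin_map M (1, \<alpha>))"
    by (simp add: lin_map_mult[symmetric] mat2_inv_mult[OF M] lin_map_one)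
  also have "\<dots> = \<kappa> *\<^sub>R lin_map (mat2_inv M) (1, \<alpha>)"
    by (simp only: \<kappa>(2) lin_map_scaleR)
  finally have "inverse \<kappa> *\<^sub>R (1, \<alpha>) = lin_map (mat2_inv M) (1, \<alpha>)"
    using \<kappa>(1) by (metis scaleR_scaleR left_inverse scaleR_one less_irrefl)
  then show ?thesis
    using \<kappa>(1) unfolding positive_eigenvector_def by (intro exI[of _ "inverse \<kappa>"]) simp
qed

lemma GL2Z_transpose_surj:
  assumes "(a, b, c, d) \<in> GL2Z"
  obtains j k where "m = a * j + c * k" "n = b * j + d * k"
proof
  let ?e = "a * d - b * c"
  have e: "?e * ?e = 1" using GL2Z_det_square[OF assms] by simp
  have "a * (?e * (d * m - c * n)) + c * (?e * (a * n - b * m)) = (?e * ?e) * m"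
    and "b * (?e * (d * m - c * n)) + d * (?e * (a * n - b * m)) = (?e * ?e) * n"
    by (simp_all add: algebra_simps)
  then show "m = a * (?e * (d * m - c * n)) + c * (?e * (a * n - b * m))"
    and "n = b * (?e * (d * m - c * n)) + d * (?e * (a * n - b * m))"
    unfolding e by simp_all
qed

lemma positive_eigenvector_piA_in_A_alpha:
  assumes M: "M \<in> GL2Z" and eig: "positive_eigenvector \<alpha> M" and f: "f \<in> A_alpha \<alpha>"
  shows "piA M f \<in> A_alpha \<alpha>"
proof -
  obtain a b c d where Md: "M = (a, b, c, d)" by (cases M) auto
  have pos: "of_int a + \<alpha> * of_int b > 0" and eq: "of_int c + \<alpha> * of_int d = \<alpha> * (of_int a + \<alpha> * of_int b)"
    using eig unfolding Md positive_eigenvector_iff by auto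
  have f_cont: "continuous_on torus f"
    and f_vanish: "\<And>j k. of_int j + \<alpha> * of_int k < 0 \<Longrightarrow> fourier_coeff f j k = 0"
    using f unfolding A_alpha_def by auto
  have "fourier_coeff (piA M f) m n = 0" if neg: "of_int m + \<alpha> * of_int n < 0" for m n
  proof -
    obtain j k where jk: "m = a * j + c * k" "n = b * j + d * k"
      using GL2Z_transpose_surj M unfolding Md by blast
    have "of_int m + \<alpha> * of_int n = of_int j * (of_int a + \<alpha> * of_int b) + of_int k * (of_int c + \<alpha> * of_int d)"
      unfolding jk by (simp add: algebra_simps)
    also have "\<dots> = (of_int a + \<alpha> * of_int b) * (of_int j + \<alpha> * of_int k)"
      unfolding eq by (simp add: algebra_simps)
    finally have "of_int m + \<alpha> * of_int n = (of_int a + \<alpha> * of_int b) * (of_int j + \<alpha> * of_int k)" .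
    then have "of_int j + \<alpha> * of_int k < 0"
      using neg pos by (simp add: mult_less_0_iff)
    then show ?thesis
      unfolding jk Md using fourier_coeff_piA[OF M[unfolded Md] f_cont] f_vanish by simp
  qed
  then show ?thesis
    unfolding A_alpha_def using continuous_on_piA[OF f_cont] by simp
qed

lemma positive_eigenvector_imp_isometric_aut:
  assumes M: "M \<in> GL2Z" and eig: "positive_eigenvector \<alpha> M"
  shows "isometric_aut \<alpha> M"
  unfolding isometric_aut_def
proof (intro conjI ballI impI)
  fix f assume "f \<in> A_alpha \<alpha>"
  then show "piA M f \<in> A_alpha \<alpha>" by (rule positive_eigenvector_piA_in_A_alpha[OF M eig])
  have "(\<lambda>x. cmod (piA M f x)) ` torus = (\<lambda>x. cmod (f x)) ` (phi M ` torus)"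
    unfolding piA_def by (simp add: image_image)
  then show "sup_norm (piA M f) = sup_norm f"
    unfolding sup_norm_def phi_image_torus[OF M] by simp
next
  fix f g x assume "\<forall>x\<in>torus. piA M f x = piA M g x" and x: "x \<in> torus"
  then have "piA M f (phi (mat2_inv M) x) = piA M g (phi (mat2_inv M) x)"
    using phi_in_torus by blast
  then show "f x = g x" unfolding piA_def using phi_inv_right[OF M x] by simp
next
  fix g assume g: "g \<in> A_alpha \<alpha>"
  show "\<exists>f\<in>A_alpha \<alpha>. \<forall>x\<in>torus. piA M f x = g x"
  proof (intro bexI ballI)
    show "piA (mat2_inv M) g \<in> A_alpha \<alpha>"
      using positive_eigenvector_piA_in_A_alpha mat2_inv_in_GL2Z[OF M] positive_eigenvector_inv[OF M eig] g .
    fix x assume "x \<in> torus"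
    then show "piA M (piA (mat2_inv M) g) x = g x"
      unfolding piA_def using phi_inv_left[OF M] by simp
  qed
qed

lemma irrational_int_combination_eq_0:
  fixes \<alpha> :: real
  assumes "\<alpha> \<notin> \<rat>" "of_int a + \<alpha> * of_int b = 0"
  shows "a = 0 \<and> b = 0"
proof (cases "b = 0")
  case True
  then show ?thesis using assms by simp
next
  case False
  then have "\<alpha> = - of_int a / of_int b" using assms(2) by (simp add: field_simps)
  then show ?thesis using assms(1) by simp
qed

lemma irrational_small_positive_combination:
  fixes \<alpha> \<epsilon> :: real
  assumes "\<alpha> \<notin> \<rat>" "\<epsilon> > 0"
  obtains j k :: int where "k > 0" "0 < of_int j + \<alpha> * of_int k" "of_int j + \<alpha> * of_int k < \<epsilon>"
proof -
  obtain h k :: int where "k > 0" "\<bar>of_int k * \<alpha> - of_int h - \<epsilon>/2\<bar> < \<epsilon>/2"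
    using sequence_of_fractional_parts_is_dense[OF assms(1) half_gt_zero[OF assms(2)]] by blast
  then show ?thesis using that[of k "-h"] unfolding abs_less_iff by (simp add: mult.commute)
qed

lemma irrational_halfplane_preserving_functional:
  fixes \<alpha> \<beta> \<gamma> :: real
  assumes irr: "\<alpha> \<notin> \<rat>"
    and H: "\<And>j k. of_int j + \<alpha> * of_int k \<ge> 0 \<Longrightarrow> \<beta> * of_int j + \<gamma> * of_int k \<ge> 0"
  shows "\<beta> \<ge> 0 \<and> \<gamma> = \<alpha> * \<beta>"
proof -
  have \<beta>: "\<beta> \<ge> 0" using H[of 1 0] by simp
  define \<delta> where "\<delta> = \<gamma> - \<alpha> * \<beta>"
  have "\<delta> = 0"
  proof (rule ccontr)
    assume "\<delta> \<noteq> 0"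
    define \<epsilon> where "\<epsilon> = \<bar>\<delta>\<bar> / (\<beta> + 1)"
    have \<epsilon>: "\<epsilon> > 0" using \<open>\<delta> \<noteq> 0\<close> \<beta> unfolding \<epsilon>_def by simp
    have "\<beta> * \<epsilon> < \<bar>\<delta>\<bar>"
      using \<open>\<delta> \<noteq> 0\<close> \<beta> unfolding \<epsilon>_def by (simp add: field_simps)
    obtain j k where jk: "\<delta> * of_int k < 0" "0 < of_int j + \<alpha> * of_int k" "of_int j + \<alpha> * of_int k < \<epsilon>"
    proof (cases "\<delta> > 0")
      case True
      have "- \<alpha> \<notin> \<rat>" using irr by simp
      from irrational_small_positive_combination[OF this \<epsilon>] obtain j k where
        "k > 0" "0 < of_int j + - \<alpha> * of_int k" "of_int j + - \<alpha> * of_int k < \<epsilon>" .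
      then show ?thesis using that[of "-k" j] True by simp
    next
      case False
      from irrational_small_positive_combination[OF irr \<epsilon>] obtain j k where
        "k > 0" "0 < of_int j + \<alpha> * of_int k" "of_int j + \<alpha> * of_int k < \<epsilon>" .
      then show ?thesis using that[of k j] False \<open>\<delta> \<noteq> 0\<close> by (simp add: mult_neg_pos)
    qed
    have "\<bar>of_int k\<bar> \<ge> (1::real)" using jk(1) by (cases "k = 0") auto
    then have "\<bar>\<delta>\<bar> \<le> \<bar>\<delta> * of_int k\<bar>"
      unfolding abs_mult using mult_left_mono[of 1 "\<bar>of_int k\<bar>" "\<bar>\<delta>\<bar>"] by simp
    then have "\<delta> * of_int k \<le> - \<bar>\<delta>\<bar>"
      using jk(1) by simp
    moreover have "\<beta> * (of_int j + \<alpha> * of_int k) \<le> \<beta> * \<epsilon>"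
      using jk \<beta> by (intro mult_left_mono) auto
    moreover have "\<beta> * of_int j + \<gamma> * of_int k = \<beta> * (of_int j + \<alpha> * of_int k) + \<delta> * of_int k"
      unfolding \<delta>_def by (simp add: algebra_simps)
    ultimately show False
      using H[of j k] jk(2) \<open>\<beta> * \<epsilon> < \<bar>\<delta>\<bar>\<close> by linarith
  qed
  then show ?thesis using \<beta> unfolding \<delta>_def by simp
qed

lemma preserves_A_alpha_imp_positive_eigenvector:
  assumes irr: "\<alpha> \<notin> \<rat>" and M: "M \<in> GL2Z" and pres: "\<forall>f\<in>A_alpha \<alpha>. piA M f \<in> A_alpha \<alpha>"
  shows "positive_eigenvector \<alpha> M"
proof -
  obtain a b c d where Md: "M = (a, b, c, d)" by (cases M) auto
  have "(of_int a + \<alpha> * of_int b) * of_int j + (of_int c + \<alpha> * of_int d) * of_int k \<ge> 0"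
    if jk: "of_int j + \<alpha> * of_int k \<ge> 0" for j k
  proof -
    have "piA M (torus_monomial j k) \<in> A_alpha \<alpha>" using pres torus_monomial_in_A_alpha[OF jk] by blast
    moreover have "fourier_coeff (piA M (torus_monomial j k)) (a * j + c * k) (b * j + d * k) = 1"
      using fourier_coeff_piA[OF M[unfolded Md] continuous_on_torus_monomial]
      unfolding Md by (simp add: fourier_coeff_torus_monomial)
    ultimately have "\<not> of_int (a * j + c * k) + \<alpha> * of_int (b * j + d * k) < 0"
      unfolding A_alpha_def by force
    then show ?thesis by (simp add: algebra_simps)
  qed
  from irrational_halfplane_preserving_functional[OF irr this]
  have nonneg: "of_int a + \<alpha> * of_int b \<ge> 0" and eq: "of_int c + \<alpha> * of_int d = \<alpha> * (of_int a + \<alpha> * of_int b)"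
    by auto
  have "of_int a + \<alpha> * of_int b \<noteq> 0"
  proof
    assume "of_int a + \<alpha> * of_int b = 0"
    then have "a = 0 \<and> b = 0" "c = 0 \<and> d = 0"
      using eq irrational_int_combination_eq_0[OF irr] by simp_all
    then show False using M unfolding Md GL2Z_def by simp
  qed
  then show ?thesis unfolding Md positive_eigenvector_iff using nonneg eq by simp
qed

lemma isometric_aut_iff_positive_eigenvector:
  assumes "\<alpha> \<notin> \<rat>" "M \<in> GL2Z"
  shows "isometric_aut \<alpha> M \<longleftrightarrow> positive_eigenvector \<alpha> M"
  using assms positive_eigenvector_imp_isometric_aut preserves_A_alpha_imp_positive_eigenvector
  unfolding isometric_aut_def by blast

section \<open>Units of \<open>\<int>[sqrt D]\<close>\<close>

definition pell_value :: "int \<Rightarrow> int \<Rightarrow> int \<Rightarrow> real" where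
  "pell_value D x y = of_int x + sqrt (of_int D) * of_int y"

lemma pell_norm_mult:
  fixes D x y x' y' :: int
  shows "(x * x' + D * y * y')\<^sup>2 - D * (x * y' + y * x')\<^sup>2 = (x\<^sup>2 - D * y\<^sup>2) * (x'\<^sup>2 - D * y'\<^sup>2)"
  by (simp add: power2_eq_square algebra_simps)

context
  fixes D :: int
  assumes D_pos: "D > 0"
begin

lemma sqrt_D_square: "sqrt (of_int D) * sqrt (of_int D) = of_int D"
  using D_pos by simp

lemma pell_value_mult:
  "pell_value D (x * x' + D * y * y') (x * y' + y * x') = pell_value D x y * pell_value D x' y'"
  unfolding pell_value_def using sqrt_D_square by (simp add: algebra_simps)

lemma pell_value_conj:
  "pell_value D x y * (of_int x - sqrt (of_int D) * of_int y) = of_int (x\<^sup>2 - D * y\<^sup>2)"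
  unfolding pell_value_def using sqrt_D_square by (simp add: power2_eq_square algebra_simps)

lemma pell_value_unit_inverse:
  assumes "\<bar>x\<^sup>2 - D * y\<^sup>2\<bar> = 1"
  shows "pell_value D ((x\<^sup>2 - D * y\<^sup>2) * x) (- ((x\<^sup>2 - D * y\<^sup>2) * y)) * pell_value D x y = 1"
proof -
  define N where "N = x\<^sup>2 - D * y\<^sup>2"
  have "N * N = 1" using assms unfolding N_def by (metis abs_mult_self_eq mult_1_right)
  have "pell_value D (N * x) (- (N * y)) = of_int N * (of_int x - sqrt (of_int D) * of_int y)"
    unfolding pell_value_def by (simp add: algebra_simps)
  then have "pell_value D (N * x) (- (N * y)) * pell_value D x y = of_int (N * N)"
    using pell_value_conj[of x y] unfolding N_def[symmetric] by (simp add: mult_ac)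
  then show ?thesis using \<open>N * N = 1\<close> unfolding N_def by simp
qed

lemma pell_value_gt_1_imp_pos:
  assumes unit: "\<bar>x\<^sup>2 - D * y\<^sup>2\<bar> = 1" and gt: "pell_value D x y > 1"
  shows "x > 0" "y > 0"
proof -
  define w where "w = of_int x - sqrt (of_int D) * of_int y"
  have "\<bar>pell_value D x y\<bar> * \<bar>w\<bar> = 1"
    unfolding w_def abs_mult[symmetric] pell_value_conj using unit by (metis of_int_abs of_int_1)
  then have "\<bar>w\<bar> < 1"
    using gt mult_left_mono[of 1 "\<bar>w\<bar>" "\<bar>pell_value D x y\<bar>"] by fastforce
  moreover have "2 * of_int x = pell_value D x y + w" "2 * (sqrt (of_int D) * of_int y) = pell_value D x y - w"
    unfolding pell_value_def w_def by simp_all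
  ultimately have "of_int x > (0::real)" "sqrt (of_int D) * of_int y > 0"
    using gt unfolding abs_less_iff by linarith+
  then show "x > 0" "y > 0"
    using D_pos by (simp_all add: zero_less_mult_iff)
qed

lemma fundamental_solution_le:
  assumes fund: "is_fundamental_solution D e x1 y1" and e: "\<bar>e\<bar> = 1"
    and sol: "x\<^sup>2 - D * y\<^sup>2 = e" and gt: "pell_value D x y > 1"
  shows "pell_value D x1 y1 \<le> pell_value D x y"
proof -
  have fund1: "x1 > 0" "y1 > 0" "x1\<^sup>2 - D * y1\<^sup>2 = e"
    and least: "\<And>x y. x > 0 \<and> y > 0 \<and> x\<^sup>2 - D * y\<^sup>2 = e \<longrightarrow> x1 \<le> x"
    using fund unfolding is_fundamental_solution_def by blast+
  have "\<bar>x\<^sup>2 - D * y\<^sup>2\<bar> = 1" using sol e by simp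
  note pos = pell_value_gt_1_imp_pos[OF this gt]
  then have "x1 \<le> x" using least sol by blast
  then have "x1\<^sup>2 \<le> x\<^sup>2" using fund1(1) by (intro power_mono) simp_all
  then have "D * y1\<^sup>2 \<le> D * y\<^sup>2" using fund1(3) sol by linarith
  then have "y1\<^sup>2 \<le> y\<^sup>2" using D_pos by (rule mult_left_le_imp_le)
  then have "y1 \<le> y" using pos(2) by (rule power2_le_imp_le[OF _ less_imp_le])
  then have "sqrt (of_int D) * of_int y1 \<le> sqrt (of_int D) * of_int y"
    using D_pos by (intro mult_left_mono) simp_all
  then show ?thesis
    using \<open>x1 \<le> x\<close> unfolding pell_value_def by linarith
qed

text \<open>The fundamental solution is the smallest unit exceeding \<open>1\<close> whenever it has the least
  possible norm: if \<open>x\<^sup>2 - D y\<^sup>2 = -1\<close> is solvable, a unit \<open>u\<close> of norm \<open>1\<close> with \<open>1 < u < \<epsilon>\<close>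
  would make \<open>\<epsilon> / u\<close> a smaller unit of norm \<open>-1\<close>.\<close>
lemma pell_unit_ge_fundamental:
  assumes fund: "is_fundamental_solution D e x1 y1" and e: "\<bar>e\<bar> = 1"
    and minimal: "e = 1 \<Longrightarrow> \<not> (\<exists>x y. x\<^sup>2 - D * y\<^sup>2 = -1)"
    and unit: "\<bar>x\<^sup>2 - D * y\<^sup>2\<bar> = 1" and gt: "pell_value D x y > 1"
  shows "pell_value D x1 y1 \<le> pell_value D x y"
proof (cases "x\<^sup>2 - D * y\<^sup>2 = e")
  case True
  then show ?thesis using fundamental_solution_le[OF fund e _ gt] by simp
next
  case False
  have "x\<^sup>2 - D * y\<^sup>2 \<noteq> -1 \<or> e \<noteq> 1" using minimal by blast
  then have "e = -1" and norm1: "x\<^sup>2 - D * y\<^sup>2 = 1"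
    using False e unit by arith+
  show ?thesis
  proof (rule ccontr)
    assume "\<not> ?thesis"
    then have lt: "pell_value D x y < pell_value D x1 y1" by simp
    define x3 where "x3 = x1 * x + D * y1 * (- y)"
    define y3 where "y3 = x1 * (- y) + y1 * x"
    have fund1: "x1\<^sup>2 - D * y1\<^sup>2 = e"
      using fund unfolding is_fundamental_solution_def by simp
    have norm3: "x3\<^sup>2 - D * y3\<^sup>2 = e"
      unfolding x3_def y3_def pell_norm_mult fund1 using norm1 by simp
    have "pell_value D x3 y3 * pell_value D x y = pell_value D x1 y1"
      unfolding x3_def y3_def pell_value_mult using pell_value_unit_inverse[of x y] norm1 by (simp add: mult.assoc)
    then have quotient: "pell_value D x3 y3 = pell_value D x1 y1 / pell_value D x y"
      using gt by (simp add: field_simps)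
    then have "pell_value D x3 y3 > 1"
      using lt gt by simp
    then have "pell_value D x1 y1 \<le> pell_value D x1 y1 / pell_value D x y"
      using fundamental_solution_le[OF fund e norm3] quotient by simp
    then show False
      using lt gt by (simp add: le_divide_eq)
  qed
qed

lemma fundamental_pell_value_gt_1:
  assumes "is_fundamental_solution D e x1 y1"
  shows "pell_value D x1 y1 > 1"
proof -
  have "x1 \<ge> 1" "y1 > 0" using assms unfolding is_fundamental_solution_def by auto
  moreover have "sqrt (of_int D) > 0" using D_pos by simp
  ultimately have "of_int x1 \<ge> (1::real)" "sqrt (of_int D) * of_int y1 > 0" by simp_all
  then show ?thesis unfolding pell_value_def by linarith
qed

end

lemma pell_value_inj:
  assumes "sqrt (of_int D) \<notin> \<rat>" "pell_value D x y = pell_value D x' y'"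
  shows "x = x' \<and> y = y'"
  using irrational_int_combination_eq_0[OF assms(1), of "x - x'" "y - y'"] assms(2)
  unfolding pell_value_def by (simp add: algebra_simps)

lemma powi_bracket:
  fixes \<epsilon> u :: real
  assumes \<epsilon>: "\<epsilon> > 1" and u: "u > 0"
  obtains n :: int where "\<epsilon> powi n \<le> u" "u < \<epsilon> powi (n + 1)"
proof
  define n where "n = \<lfloor>log \<epsilon> u\<rfloor>"
  have powr: "\<epsilon> powi m = \<epsilon> powr of_int m" for m
    using \<epsilon> powr_real_of_int'[of \<epsilon> m] by simp
  have u_eq: "u = \<epsilon> powr log \<epsilon> u"
    using \<epsilon> u by simp
  have "of_int n \<le> log \<epsilon> u" "log \<epsilon> u < of_int (n + 1)"
    unfolding n_def by linarith+
  then show "\<epsilon> powi n \<le> u" "u < \<epsilon> powi (n + 1)"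
    unfolding powr using \<epsilon> by (subst u_eq; simp)+
qed

section \<open>A matrix model of \<open>\<int>[sqrt (p q)]\<close>\<close>

text \<open>\<open>pell_matrix p q x y = x I + y J\<close> with \<open>J = [[0, q], [p, 0]]\<close> and \<open>J\<^sup>2 = p q I\<close>, so it
  represents \<open>x + y sqrt (p q)\<close>, i.e. \<open>pell_value (p q) x y\<close>.\<close>
definition pell_matrix :: "nat \<Rightarrow> nat \<Rightarrow> int \<Rightarrow> int \<Rightarrow> mat2" where
  "pell_matrix p q x y = (x, int q * y, int p * y, x)"

lemma pell_matrix_mult:
  "mat2_mult (pell_matrix p q x y) (pell_matrix p q x' y') = pell_matrix p q (x * x' + int (p * q) * y * y') (x * y' + y * x')"
  unfolding pell_matrix_def by (simp add: algebra_simps)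

lemma pell_matrix_inv:
  "mat2_inv (pell_matrix p q x y) = pell_matrix p q ((x\<^sup>2 - int (p * q) * y\<^sup>2) * x) (- ((x\<^sup>2 - int (p * q) * y\<^sup>2) * y))"
  unfolding pell_matrix_def by (simp add: Let_def power2_eq_square algebra_simps)

lemma pell_matrix_det: "mat2_det (pell_matrix p q x y) = x\<^sup>2 - int (p * q) * y\<^sup>2"
  unfolding pell_matrix_def by (simp add: power2_eq_square algebra_simps)

context
  fixes p q :: nat
  assumes p_pos: "p > 0" and q_pos: "q > 0"
begin

lemma pq_pos: "int (p * q) > 0"
  using p_pos q_pos by simp

lemma pell_matrix_pow:
  assumes "\<bar>x\<^sup>2 - int (p * q) * y\<^sup>2\<bar> = 1"
  shows "\<exists>X Y. mat2_pow (pell_matrix p q x y) n = pell_matrix p q X Y \<and>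
    pell_value (int (p * q)) X Y = pell_value (int (p * q)) x y ^ n \<and> \<bar>X\<^sup>2 - int (p * q) * Y\<^sup>2\<bar> = 1"
proof (induction n)
  case 0
  show ?case
    by (intro exI[of _ 1] exI[of _ 0]) (simp add: pell_matrix_def mat2_one_def pell_value_def)
next
  case (Suc n)
  then obtain X Y where XY: "mat2_pow (pell_matrix p q x y) n = pell_matrix p q X Y"
    "pell_value (int (p * q)) X Y = pell_value (int (p * q)) x y ^ n" "\<bar>X\<^sup>2 - int (p * q) * Y\<^sup>2\<bar> = 1"
    by blast
  show ?case
  proof (intro exI conjI)
    show "mat2_pow (pell_matrix p q x y) (Suc n) = pell_matrix p q (x * X + int (p * q) * y * Y) (x * Y + y * X)"
      using XY(1) by (simp add: pell_matrix_mult)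
    show "pell_value (int (p * q)) (x * X + int (p * q) * y * Y) (x * Y + y * X) = pell_value (int (p * q)) x y ^ Suc n"
      using XY(2) pq_pos by (simp add: pell_value_mult)
    show "\<bar>(x * X + int (p * q) * y * Y)\<^sup>2 - int (p * q) * (x * Y + y * X)\<^sup>2\<bar> = 1"
      unfolding pell_norm_mult abs_mult using assms XY(3) by simp
  qed
qed

lemma pell_matrix_zpow:
  assumes unit: "\<bar>x\<^sup>2 - int (p * q) * y\<^sup>2\<bar> = 1"
  shows "\<exists>X Y. mat2_zpow (pell_matrix p q x y) k = pell_matrix p q X Y \<and>
    pell_value (int (p * q)) X Y = pell_value (int (p * q)) x y powi k \<and> \<bar>X\<^sup>2 - int (p * q) * Y\<^sup>2\<bar> = 1"
proof (cases "k \<ge> 0")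
  case True
  then show ?thesis
    using pell_matrix_pow[OF unit, of "nat k"] unfolding mat2_zpow_def by (simp add: power_int_def)
next
  case False
  define N where "N = x\<^sup>2 - int (p * q) * y\<^sup>2"
  have "N * N = 1" using unit unfolding N_def by (metis abs_mult_self_eq mult_1_right)
  have "(N * x)\<^sup>2 - int (p * q) * (- (N * y))\<^sup>2 = N\<^sup>2 * (x\<^sup>2 - int (p * q) * y\<^sup>2)"
    by (simp add: power_mult_distrib right_diff_distrib mult_ac)
  then have "\<bar>(N * x)\<^sup>2 - int (p * q) * (- (N * y))\<^sup>2\<bar> = 1"
    using unit \<open>N * N = 1\<close> unfolding N_def[symmetric] by (simp add: abs_mult power2_eq_square)
  moreover have "pell_value (int (p * q)) (N * x) (- (N * y)) = inverse (pell_value (int (p * q)) x y)"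
    using pell_value_unit_inverse[OF pq_pos unit] unfolding N_def by (metis inverse_unique mult.commute)
  ultimately show ?thesis
    using False pell_matrix_pow[of "N * x" "- (N * y)" "nat (- k)"]
    unfolding mat2_zpow_def pell_matrix_inv N_def by (simp add: power_int_def)
qed

text \<open>Dividing a unit by the power of the fundamental unit just below it leaves a unit in
  \<open>[1, \<epsilon>)\<close>, which can only be \<open>1\<close>.\<close>
lemma pell_matrix_eq_fundamental_power:
  assumes irr: "sqrt (real (p * q)) \<notin> \<rat>"
    and fund: "is_fundamental_solution (int (p * q)) e x1 y1" and e: "\<bar>e\<bar> = 1"
    and minimal: "e = 1 \<Longrightarrow> \<not> (\<exists>x y. x\<^sup>2 - int (p * q) * y\<^sup>2 = -1)"
    and unit: "\<bar>x\<^sup>2 - int (p * q) * y\<^sup>2\<bar> = 1" and pos: "pell_value (int (p * q)) x y > 0"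
  shows "\<exists>k. pell_matrix p q x y = mat2_zpow (pell_matrix p q x1 y1) k"
proof -
  define \<epsilon> where "\<epsilon> = pell_value (int (p * q)) x1 y1"
  have \<epsilon>: "\<epsilon> > 1"
    unfolding \<epsilon>_def by (rule fundamental_pell_value_gt_1[OF pq_pos fund])
  have unit1: "\<bar>x1\<^sup>2 - int (p * q) * y1\<^sup>2\<bar> = 1"
    using fund e unfolding is_fundamental_solution_def by simp
  obtain k where k: "\<epsilon> powi k \<le> pell_value (int (p * q)) x y" "pell_value (int (p * q)) x y < \<epsilon> powi (k + 1)"
    using powi_bracket[OF \<epsilon> pos] .
  obtain X Y where XY: "pell_value (int (p * q)) X Y = \<epsilon> powi (- k)" "\<bar>X\<^sup>2 - int (p * q) * Y\<^sup>2\<bar> = 1"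
    using pell_matrix_zpow[OF unit1, of "- k"] unfolding \<epsilon>_def by blast
  define x2 where "x2 = x * X + int (p * q) * y * Y"
  define y2 where "y2 = x * Y + y * X"
  have unit2: "\<bar>x2\<^sup>2 - int (p * q) * y2\<^sup>2\<bar> = 1"
    unfolding x2_def y2_def pell_norm_mult abs_mult using unit XY(2) by simp
  have value2: "pell_value (int (p * q)) x2 y2 = pell_value (int (p * q)) x y / \<epsilon> powi k"
    unfolding x2_def y2_def pell_value_mult[OF pq_pos] XY(1)
    by (simp add: power_int_minus divide_inverse)
  have "\<epsilon> powi k > 0" "\<epsilon> powi (k + 1) = \<epsilon> powi k * \<epsilon>"
    using \<epsilon> by (simp_all add: power_int_add)
  then have "1 \<le> pell_value (int (p * q)) x2 y2" "pell_value (int (p * q)) x2 y2 < \<epsilon>"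
    unfolding value2 using k by (simp_all add: field_simps)
  then have "pell_value (int (p * q)) x2 y2 = 1"
    using pell_unit_ge_fundamental[OF pq_pos fund e minimal unit2] unfolding \<epsilon>_def by fastforce
  then have value_eq: "pell_value (int (p * q)) x y = \<epsilon> powi k"
    using \<open>\<epsilon> powi k > 0\<close> unfolding value2 by simp
  obtain X' Y' where XY': "mat2_zpow (pell_matrix p q x1 y1) k = pell_matrix p q X' Y'"
    "pell_value (int (p * q)) X' Y' = \<epsilon> powi k"
    using pell_matrix_zpow[OF unit1, of k] unfolding \<epsilon>_def by blast
  then have "x = X' \<and> y = Y'"
    using pell_value_inj[of "int (p * q)" x y X' Y'] irr value_eq by simp
  then show ?thesis using XY'(1) by (intro exI[of _ k]) simp
qed

lemma sqrt_p_div_q_times_q: "sqrt (real p / real q) * real q = sqrt (real (p * q))"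
proof -
  have "sqrt (real p / real q) * real q = sqrt (real p / real q) * sqrt (real q * real q)"
    by simp
  also have "\<dots> = sqrt (real (p * q))"
    unfolding real_sqrt_mult[symmetric] using q_pos by simp
  finally show ?thesis .
qed

lemma sqrt_pq_irrational:
  assumes "sqrt (real p / real q) \<notin> \<rat>"
  shows "sqrt (real (p * q)) \<notin> \<rat>"
proof
  assume "sqrt (real (p * q)) \<in> \<rat>"
  then have "sqrt (real (p * q)) / real q \<in> \<rat>" by simp
  then show False
    using assms sqrt_p_div_q_times_q[symmetric] q_pos by simp
qed

text \<open>By irrationality the eigenvector equation \<open>c + \<alpha> d = \<alpha> a + \<alpha>\<^sup>2 b\<close> splits into
  \<open>d = a\<close> and \<open>q c = p b\<close>, and coprimality makes \<open>q\<close> divide \<open>b\<close>.\<close>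
lemma positive_eigenvector_iff_pell_matrix:
  assumes cop: "coprime p q" and irr: "sqrt (real p / real q) \<notin> \<rat>"
  shows "positive_eigenvector (sqrt (real p / real q)) M \<longleftrightarrow>
    (\<exists>x y. M = pell_matrix p q x y \<and> pell_value (int (p * q)) x y > 0)"
proof -
  define \<alpha> where "\<alpha> = sqrt (real p / real q)"
  have \<alpha>\<alpha>: "\<alpha> * \<alpha> * real q = real p"
    unfolding \<alpha>_def using q_pos by simp
  have value_eq: "pell_value (int (p * q)) x y = of_int x + \<alpha> * of_int (int q * y)" for x y
    unfolding pell_value_def of_int_of_nat_eq \<alpha>_def sqrt_p_div_q_times_q[symmetric] by simp
  have "positive_eigenvector \<alpha> M \<longleftrightarrow> (\<exists>x y. M = pell_matrix p q x y \<and> pell_value (int (p * q)) x y > 0)"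
  proof
    assume eig: "positive_eigenvector \<alpha> M"
    obtain a b c d where M: "M = (a, b, c, d)" by (cases M) auto
    from eig have pos: "of_int a + \<alpha> * of_int b > 0"
      and eq: "of_int c + \<alpha> * of_int d = \<alpha> * (of_int a + \<alpha> * of_int b)"
      unfolding M positive_eigenvector_iff by auto
    have "real q * (of_int c + \<alpha> * of_int d - \<alpha> * (of_int a + \<alpha> * of_int b))
        = real q * of_int c + \<alpha> * (real q * of_int d - real q * of_int a) - (\<alpha> * \<alpha> * real q) * of_int b"
      by (simp add: algebra_simps)
    also have "\<dots> = of_int (int q * c - int p * b) + \<alpha> * of_int (int q * (d - a))"
      unfolding \<alpha>\<alpha> by (simp add: algebra_simps)
    finally have "of_int (int q * c - int p * b) + \<alpha> * of_int (int q * (d - a)) = 0"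
      using eq by simp
    then have "int q * c - int p * b = 0 \<and> int q * (d - a) = 0"
      by (rule irrational_int_combination_eq_0[OF irr[folded \<alpha>_def]])
    then have "int q * c = int p * b" "d = a"
      using q_pos by auto
    moreover from this(1) have "int q dvd b"
      using cop by (metis coprime_commute coprime_dvd_mult_right_iff coprime_int_iff dvd_triv_left)
    ultimately obtain y where "b = int q * y" "c = int p * y" "d = a"
      using q_pos by (auto elim!: dvdE)
    then show "\<exists>x y. M = pell_matrix p q x y \<and> pell_value (int (p * q)) x y > 0"
      using pos unfolding M pell_matrix_def value_eq by auto
  next
    assume "\<exists>x y. M = pell_matrix p q x y \<and> pell_value (int (p * q)) x y > 0"
    then obtain x y where M: "M = pell_matrix p q x y" and pos: "pell_value (int (p * q)) x y > 0"
      by blast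
    have "of_int (int p * y) + \<alpha> * of_int x = \<alpha> * (of_int x + \<alpha> * of_int (int q * y))"
      using \<alpha>\<alpha> by (simp add: algebra_simps)
    then show "positive_eigenvector \<alpha> M"
      using pos unfolding M pell_matrix_def positive_eigenvector_iff value_eq by simp
  qed
  then show ?thesis unfolding \<alpha>_def .
qed

lemma isometric_aut_iff_fundamental_power:
  assumes cop: "coprime p q" and irr: "sqrt (real p / real q) \<notin> \<rat>"
    and fund: "is_fundamental_solution (int (p * q)) e x1 y1" and e: "\<bar>e\<bar> = 1"
    and minimal: "e = 1 \<Longrightarrow> \<not> (\<exists>x y. x\<^sup>2 - int (p * q) * y\<^sup>2 = -1)"
    and A: "A \<in> GL2Z"
  shows "isometric_aut (sqrt (real p / real q)) A \<longleftrightarrow> (\<exists>n. A = mat2_zpow (pell_matrix p q x1 y1) n)"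
  unfolding isometric_aut_iff_positive_eigenvector[OF irr A] positive_eigenvector_iff_pell_matrix[OF cop irr]
proof safe
  fix x y assume "A = pell_matrix p q x y" "pell_value (int (p * q)) x y > 0"
  moreover have "\<bar>x\<^sup>2 - int (p * q) * y\<^sup>2\<bar> = 1"
    using A \<open>A = pell_matrix p q x y\<close> pell_matrix_det unfolding GL2Z_def by auto
  ultimately show "\<exists>n. pell_matrix p q x y = mat2_zpow (pell_matrix p q x1 y1) n"
    using pell_matrix_eq_fundamental_power[OF sqrt_pq_irrational[OF irr] fund e minimal] by blast
next
  fix n assume "A = mat2_zpow (pell_matrix p q x1 y1) n"
  moreover have "\<bar>x1\<^sup>2 - int (p * q) * y1\<^sup>2\<bar> = 1" "pell_value (int (p * q)) x1 y1 > 0"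
    using fund e fundamental_pell_value_gt_1[OF pq_pos fund] unfolding is_fundamental_solution_def by auto
  ultimately show "\<exists>x y. mat2_zpow (pell_matrix p q x1 y1) n = pell_matrix p q x y \<and> pell_value (int (p * q)) x y > 0"
    using pell_matrix_zpow by fastforce
qed

end

theorem mainTheorem15:
  fixes p q :: nat
  assumes "coprime p q"
    and "sqrt (real p / real q) \<notin> \<rat>"
  shows
   "((\<not> (\<exists>x y :: int. x\<^sup>2 - int (p * q) * y\<^sup>2 = -1)) \<longrightarrow>
      (\<forall>x1 y1. is_fundamental_solution (int (p * q)) 1 x1 y1 \<longrightarrow>
        (\<forall>A\<in>GL2Z. isometric_aut (sqrt (real p / real q)) A \<longleftrightarrow>
           (\<exists>n::int. A = mat2_zpow (x1, int q * y1, int p * y1, x1) n))))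
    \<and>
    ((\<exists>x y :: int. x\<^sup>2 - int (p * q) * y\<^sup>2 = -1) \<longrightarrow>
      (\<forall>x1 y1. is_fundamental_solution (int (p * q)) (-1) x1 y1 \<longrightarrow>
        (\<forall>A\<in>GL2Z. isometric_aut (sqrt (real p / real q)) A \<longleftrightarrow>
           (\<exists>n::int. A = mat2_zpow (x1, int q * y1, int p * y1, x1) n))))"
proof -
  have "p > 0" "q > 0"
    using assms(2) by (auto intro!: Nat.gr0I)
  note characterisation = isometric_aut_iff_fundamental_power[OF this assms, unfolded pell_matrix_def]
  show ?thesis
    using characterisation[of 1] characterisation[of "-1"] by auto
qed

end
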